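(* Let $k$ be a positive integer and let $G$ be a finite, simple, undirected, connected graph of order at least two. (a) If $G$ admits a pairing distance-$k$ resolving set, then $O_{R,k}(G)=\mathcal{M}$. (b) If $G$ admits a quasi-pairing distance-$k$ resolving set, then $O_{R,k}(G)\in\{\mathcal{M},\mathcal{N}\}$.
   Context: $d$ is the shortest-path distance and $d_k(x,y)=\min\{d(x,y),k+1\}$. A set $S\subseteq V(G)$ is a distance-$k$ resolving set if for all distinct $x,y$ some $z\in S$ has $d_k(x,z)\ne d_k(y,z)$. Let $\alpha$ be a positive integer and $X=\{\{u_1,w_1\},\dots,\{u_\alpha,w_\alpha\}\}$ a family of $\alpha$ pairwise disjoint 2-element subsets of $V(G)$ (so $|\bigcup X|=2\alpha$). Call $Z\subseteq V(G)$ a transversal of $X$ if $|Z|=\alpha$ and $Z\cap\{u_i,w_i\}\ne\emptyset$ for all $i$. $X$ is a pairing distance-$k$ resolving set if every transversal $Z$ of $X$ is a distance-$k$ resolving set. $X$ is a quasi-pairing distance-$k$ resolving set if no transversal of $X$ is a distance-$k$ resolving set, but there is a vertex $v\in V(G)-\bigcup X$ such that $Z\cup\{v\}$ is a distance-$k$ resolving set for every transversal $Z$. In the Maker-Breaker distance-$k$ resolving game on $G$, Maker and Breaker alternately select a not-yet-chosen vertex; Maker wins if his selected vertices form a distance-$k$ resolving set, Breaker wins otherwise. $O_{R,k}(G)=\mathcal{M}$ if Maker has a winning strategy whether he moves first or second, $\mathcal{B}$ if Breaker has a winning strategy whether she moves first or second, and $\mathcal{N}$ if the first player has a winning strategy.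 *)

theory Defs
  imports Main
begin

definition simple_graph :: "'a set \<Rightarrow> ('a \<Rightarrow> 'a \<Rightarrow> bool) \<Rightarrow> bool" where
  "simple_graph V E \<longleftrightarrow> finite V \<and> (\<forall>x y. E x y \<longrightarrow> x \<in> V \<and> y \<in> V)
     \<and> (\<forall>x y. E x y \<longrightarrow> E y x) \<and> (\<forall>x. \<not> E x x)"

definition is_walk :: "'a set \<Rightarrow> ('a \<Rightarrow> 'a \<Rightarrow> bool) \<Rightarrow> 'a list \<Rightarrow> bool" where
  "is_walk V E xs \<longleftrightarrow> xs \<noteq> [] \<and> set xs \<subseteq> V \<and>
     (\<forall>i. Suc i < length xs \<longrightarrow> E (xs ! i) (xs ! Suc i))"

definition graph_connected :: "'a set \<Rightarrow> ('a \<Rightarrow> 'a \<Rightarrow> bool) \<Rightarrow> bool" where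
  "graph_connected V E \<longleftrightarrow> (\<forall>x\<in>V. \<forall>y\<in>V. \<exists>xs. is_walk V E xs \<and> hd xs = x \<and> last xs = y)"

definition gdist :: "'a set \<Rightarrow> ('a \<Rightarrow> 'a \<Rightarrow> bool) \<Rightarrow> 'a \<Rightarrow> 'a \<Rightarrow> nat" where
  "gdist V E x y = (LEAST n. \<exists>xs. is_walk V E xs \<and> hd xs = x \<and> last xs = y \<and> length xs = Suc n)"

definition dist_k :: "'a set \<Rightarrow> ('a \<Rightarrow> 'a \<Rightarrow> bool) \<Rightarrow> nat \<Rightarrow> 'a \<Rightarrow> 'a \<Rightarrow> nat" where
  "dist_k V E k x y = min (gdist V E x y) (k + 1)"

definition k_resolving :: "'a set \<Rightarrow> ('a \<Rightarrow> 'a \<Rightarrow> bool) \<Rightarrow> nat \<Rightarrow> 'a set \<Rightarrow> bool" where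
  "k_resolving V E k S \<longleftrightarrow> S \<subseteq> V \<and>
     (\<forall>x\<in>V. \<forall>y\<in>V. x \<noteq> y \<longrightarrow> (\<exists>z\<in>S. dist_k V E k x z \<noteq> dist_k V E k y z))"

definition pair_family :: "'a set \<Rightarrow> 'a set set \<Rightarrow> bool" where
  "pair_family V X \<longleftrightarrow> finite X \<and> card X \<ge> 1 \<and> (\<forall>p\<in>X. p \<subseteq> V \<and> card p = 2)
     \<and> (\<forall>p\<in>X. \<forall>q\<in>X. p \<noteq> q \<longrightarrow> p \<inter> q = {})"

definition transversal :: "'a set \<Rightarrow> 'a set set \<Rightarrow> 'a set \<Rightarrow> bool" where
  "transversal V X Z \<longleftrightarrow> Z \<subseteq> V \<and> card Z = card X \<and> (\<forall>p\<in>X. Z \<inter> p \<noteq> {})"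

definition pairing_resolving :: "'a set \<Rightarrow> ('a \<Rightarrow> 'a \<Rightarrow> bool) \<Rightarrow> nat \<Rightarrow> 'a set set \<Rightarrow> bool" where
  "pairing_resolving V E k X \<longleftrightarrow> pair_family V X \<and>
     (\<forall>Z. transversal V X Z \<longrightarrow> k_resolving V E k Z)"

definition quasi_pairing_resolving :: "'a set \<Rightarrow> ('a \<Rightarrow> 'a \<Rightarrow> bool) \<Rightarrow> nat \<Rightarrow> 'a set set \<Rightarrow> bool" where
  "quasi_pairing_resolving V E k X \<longleftrightarrow> pair_family V X \<and>
     (\<forall>Z. transversal V X Z \<longrightarrow> \<not> k_resolving V E k Z) \<and>
     (\<exists>v \<in> V - \<Union>X. \<forall>Z. transversal V X Z \<longrightarrow> k_resolving V E k (insert v Z))"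

(* A position is (M, B, maker_to_move),
   M = Maker's vertices, B = Breaker's vertices. M B t  means Maker has a winning strategy from that position. *)
inductive maker_wins :: "'a set \<Rightarrow> ('a \<Rightarrow> 'a \<Rightarrow> bool) \<Rightarrow> nat \<Rightarrow> 'a set \<Rightarrow> 'a set \<Rightarrow> bool \<Rightarrow> bool"
  for V E k where
  end_win: "V - M - B = {} \<Longrightarrow> k_resolving V E k M \<Longrightarrow> maker_wins V E k M B t"
| maker_move: "v \<in> V - M - B \<Longrightarrow> maker_wins V E k (insert v M) B False \<Longrightarrow> maker_wins V E k M B True"
| breaker_move: "V - M - B \<noteq> {} \<Longrightarrow> (\<And>v. v \<in> V - M - B \<Longrightarrow> maker_wins V E k M (insert v B) True)
     \<Longrightarrow> maker_wins V E k M B False"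

datatype outcome = Outcome_M | Outcome_B | Outcome_N | Outcome_P

(* Maker first: maker_wins {} {} True; Maker second: maker_wins {} {} False.
   Since the game is finite, Breaker has a winning strategy iff Maker has none. *)
definition game_outcome :: "'a set \<Rightarrow> ('a \<Rightarrow> 'a \<Rightarrow> bool) \<Rightarrow> nat \<Rightarrow> outcome" where
  "game_outcome V E k =
    (let mf = maker_wins V E k {} {} True; ms = maker_wins V E k {} {} False in
     if mf \<and> ms then Outcome_M
     else if \<not> mf \<and> \<not> ms then Outcome_B
     else if mf \<and> \<not> ms then Outcome_N
     else Outcome_P)"

end

theory Submission
  imports Defs
begin

(* Pairing strategy: whenever Breaker takes a vertex of a pair that Maker has not yet touched,
   Maker answers with the other vertex of that pair; otherwise Maker plays anywhere. At the end
   Maker's set meets every pair, hence contains a transversal. For a quasi-pairing resolving set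
   Maker first takes the extra vertex v and then follows the pairing strategy as second player. *)

definition hits_all :: "'a set set \<Rightarrow> 'a set \<Rightarrow> bool" where
  "hits_all X M \<longleftrightarrow> (\<forall>p\<in>X. p \<inter> M \<noteq> {})"

definition threatened :: "'a set set \<Rightarrow> 'a set \<Rightarrow> 'a set \<Rightarrow> 'a set \<Rightarrow> bool" where
  "threatened X M B p \<longleftrightarrow> p \<in> X \<and> p \<inter> M = {} \<and> p \<inter> B \<noteq> {}"

definition pairing_invariant :: "'a set set \<Rightarrow> 'a set \<Rightarrow> 'a set \<Rightarrow> bool \<Rightarrow> bool" where
  "pairing_invariant X M B t \<longleftrightarrow>
     (\<forall>p. threatened X M B p \<longrightarrow> t \<and> p - B \<noteq> {} \<and> (\<forall>q. threatened X M B q \<longrightarrow> q = p))"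

lemma pairing_invariant_empty: "pairing_invariant X M {} t"
  unfolding pairing_invariant_def threatened_def by simp

lemma pairing_invariant_maker_move:
  assumes pf: "pair_family V X" and inv: "pairing_invariant X M B True" and free: "V - M - B \<noteq> {}"
  obtains v where "v \<in> V - M - B" and "pairing_invariant X (insert v M) B False"
proof (cases "\<exists>p. threatened X M B p")
  case True
  then obtain p where p: "threatened X M B p" by blast
  with inv obtain v where v: "v \<in> p - B" and unique: "\<And>q. threatened X M B q \<Longrightarrow> q = p"
    unfolding pairing_invariant_def by blast
  have "p \<subseteq> V" "p \<inter> M = {}"
    using p pf unfolding threatened_def pair_family_def by auto
  with v have "v \<in> V - M - B" by blast
  moreover have "\<not> threatened X (insert v M) B q" for q
    using unique[of q] v unfolding threatened_def by blast
  ultimately show ?thesis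
    using that unfolding pairing_invariant_def by blast
next
  case False
  from free obtain v where "v \<in> V - M - B" by blast
  moreover have "\<not> threatened X (insert v M) B q" for q
    using False unfolding threatened_def by blast
  ultimately show ?thesis
    using that unfolding pairing_invariant_def by blast
qed

lemma pairing_invariant_breaker_move:
  assumes pf: "pair_family V X" and inv: "pairing_invariant X M B False"
  shows "pairing_invariant X M (insert v B) True"
  unfolding pairing_invariant_def
proof (intro allI impI conjI TrueI)
  fix p assume p: "threatened X M (insert v B) p"
  have untouched: "p \<inter> B = {}" if "p \<in> X" "p \<inter> M = {}" for p
    using inv that unfolding pairing_invariant_def threatened_def by blast
  have vp: "v \<in> p" and pB: "p \<inter> B = {}"
    using p untouched unfolding threatened_def by blast+
  have "card p = 2" using p pf unfolding threatened_def pair_family_def by blast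
  then obtain w where "p = {v, w}" "w \<noteq> v"
    using vp by (metis card_2_iff insert_commute insert_iff singletonD)
  with pB show "p - insert v B \<noteq> {}" by blast
  show "q = p" if "threatened X M (insert v B) q" for q
  proof -
    have "v \<in> q" "q \<in> X" "p \<in> X"
      using that p untouched unfolding threatened_def by blast+
    with vp pf show ?thesis unfolding pair_family_def by blast
  qed
qed

lemma pairing_invariant_final:
  assumes pf: "pair_family V X" and inv: "pairing_invariant X M B t" and over: "V - M - B = {}"
  shows "hits_all X M"
  unfolding hits_all_def
proof (intro ballI notI)
  fix p assume p: "p \<in> X" and pM: "p \<inter> M = {}"
  have "p \<subseteq> V" "card p = 2" using p pf unfolding pair_family_def by auto
  with over pM have "p \<subseteq> B" "p \<noteq> {}" by auto
  with p pM inv show False unfolding pairing_invariant_def threatened_def by blast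
qed

lemma maker_wins_pairing_strategy:
  assumes fin: "finite V" and pf: "pair_family V X"
    and win: "\<And>M. M\<^sub>0 \<subseteq> M \<Longrightarrow> M \<subseteq> V \<Longrightarrow> hits_all X M \<Longrightarrow> k_resolving V E k M"
    and "M\<^sub>0 \<subseteq> M" "M \<subseteq> V" "pairing_invariant X M B t"
  shows "maker_wins V E k M B t"
  using assms(4-6)
proof (induction "card (V - M - B)" arbitrary: M B t rule: less_induct)
  case less
  have fewer: "card (V - M' - B') < card (V - M - B)"
    if "V - M' - B' = (V - M - B) - {v}" "v \<in> V - M - B" for M' B' v
    using that fin by (metis card_Diff1_less finite_Diff)
  show ?case
  proof (cases "V - M - B = {}")
    case True
    with less.prems pf win show ?thesis
      by (blast intro: maker_wins.end_win pairing_invariant_final)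
  next
    case free: False
    show ?thesis
    proof (cases t)
      case True
      with less.prems(3) have "pairing_invariant X M B True" by simp
      then obtain v where v: "v \<in> V - M - B" and inv: "pairing_invariant X (insert v M) B False"
        using pairing_invariant_maker_move[OF pf _ free] by blast
      have "maker_wins V E k (insert v M) B False"
        using v inv less.prems(1,2) by (intro less.hyps[OF fewer[OF _ v]]) auto
      with v True show ?thesis by (simp add: maker_wins.maker_move)
    next
      case False
      have "maker_wins V E k M (insert v B) True" if v: "v \<in> V - M - B" for v
        using less.prems False pairing_invariant_breaker_move[OF pf]
        by (intro less.hyps[OF fewer[OF _ v]]) auto
      then have "maker_wins V E k M B False" by (rule maker_wins.breaker_move[OF free])
      with False show ?thesis by simp
    qed
  qed
qed

lemma hits_all_obtain_transversal:
  assumes pf: "pair_family V X" and "M \<subseteq> V" and hit: "hits_all X M"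
  obtains Z where "transversal V X Z" and "Z \<subseteq> M"
proof -
  define c where "c p = (SOME x. x \<in> p \<inter> M)" for p
  have c: "c p \<in> p \<inter> M" if "p \<in> X" for p
    using hit that unfolding c_def hits_all_def by (metis some_in_eq)
  have "inj_on c X"
  proof (rule inj_onI)
    fix p q assume "p \<in> X" "q \<in> X" "c p = c q"
    with c have "c p \<in> p \<inter> q" by (metis IntD1 IntI)
    with \<open>p \<in> X\<close> \<open>q \<in> X\<close> pf show "p = q" unfolding pair_family_def by blast
  qed
  then have "transversal V X (c ` X)"
    using c \<open>M \<subseteq> V\<close> unfolding transversal_def by (auto simp: card_image)
  with c show ?thesis using that by blast
qed

lemma k_resolving_mono: "k_resolving V E k Z \<Longrightarrow> Z \<subseteq> M \<Longrightarrow> M \<subseteq> V \<Longrightarrow> k_resolving V E k M"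
  unfolding k_resolving_def by blast

lemma pairing_resolving_maker_wins:
  assumes fin: "finite V" and X: "pairing_resolving V E k X"
  shows "maker_wins V E k {} {} t"
proof -
  have pf: "pair_family V X" using X unfolding pairing_resolving_def by blast
  have "k_resolving V E k M" if M: "M \<subseteq> V" "hits_all X M" for M
  proof -
    obtain Z where "transversal V X Z" "Z \<subseteq> M"
      using hits_all_obtain_transversal[OF pf M] .
    with X \<open>M \<subseteq> V\<close> show ?thesis
      unfolding pairing_resolving_def by (blast intro: k_resolving_mono)
  qed
  with fin pf show ?thesis
    by (intro maker_wins_pairing_strategy[where M\<^sub>0 = "{}"]) (auto simp: pairing_invariant_empty)
qed

lemma quasi_pairing_resolving_maker_first_wins:
  assumes fin: "finite V" and X: "quasi_pairing_resolving V E k X"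
  shows "maker_wins V E k {} {} True"
proof -
  have pf: "pair_family V X" using X unfolding quasi_pairing_resolving_def by blast
  obtain v where v: "v \<in> V - \<Union>X"
    and extend: "\<And>Z. transversal V X Z \<Longrightarrow> k_resolving V E k (insert v Z)"
    using X unfolding quasi_pairing_resolving_def by blast
  have "k_resolving V E k M" if M: "{v} \<subseteq> M" "M \<subseteq> V" "hits_all X M" for M
  proof -
    obtain Z where "transversal V X Z" "Z \<subseteq> M"
      using hits_all_obtain_transversal[OF pf M(2,3)] .
    with extend M show ?thesis by (blast intro: k_resolving_mono)
  qed
  with fin pf v have "maker_wins V E k {v} {} False"
    by (intro maker_wins_pairing_strategy[where M\<^sub>0 = "{v}"]) (auto simp: pairing_invariant_empty)
  with v show ?thesis by (blast intro: maker_wins.maker_move)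
qed

lemma game_outcome_M_iff:
  "game_outcome V E k = Outcome_M \<longleftrightarrow> maker_wins V E k {} {} True \<and> maker_wins V E k {} {} False"
  unfolding game_outcome_def Let_def by simp

lemma game_outcome_M_or_N_iff:
  "game_outcome V E k \<in> {Outcome_M, Outcome_N} \<longleftrightarrow> maker_wins V E k {} {} True"
  unfolding game_outcome_def Let_def by simp

theorem mainTheorem6:
  fixes V :: "'a set" and E :: "'a \<Rightarrow> 'a \<Rightarrow> bool" and k :: nat
  assumes "k \<ge> 1"
    and "simple_graph V E" and "graph_connected V E" and "card V \<ge> 2"
  shows "((\<exists>X. pairing_resolving V E k X) \<longrightarrow> game_outcome V E k = Outcome_M)
       \<and> ((\<exists>X. quasi_pairing_resolving V E k X) \<longrightarrow> game_outcome V E k \<in> {Outcome_M, Outcome_N})"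
proof -
  have fin: "finite V" using \<open>simple_graph V E\<close> unfolding simple_graph_def by blast
  show ?thesis
    unfolding game_outcome_M_iff game_outcome_M_or_N_iff
    using pairing_resolving_maker_wins[OF fin] quasi_pairing_resolving_maker_first_wins[OF fin]
    by blast
qed

end
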